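(* Let $IS\in\{\Box,\blacksquare\}^2$ be any initial store and let $\tau$ be a correct compositional translation from $\mathrm{SYNCSIMPLE}$ into $\mathrm{LOCKSIMPLE}_{2,IS}$ of blocking type $(P_1P_1,P_2P_2)$. Then $\tau(!)$ has no prefix in $T_1^+T_2$ and no prefix in $T_2^+T_1$.
   Context: $\mathrm{SYNCSIMPLE}$: subprocesses $\mathcal{U} ::= \checkmark \mid 0 \mid\, !\mathcal{U} \mid\, ?\mathcal{U}$; processes are finite parallel compositions ($\mid$ associative, commutative, $0$ a unit). Reduction: $!\mathcal{U}_1\mid ?\mathcal{U}_2\mid \mathcal{P}\to \mathcal{U}_1\mid\mathcal{U}_2\mid\mathcal{P}$. Successful: of form $\checkmark\mid\mathcal{P}$; may-convergent: reduces to a successful process; must-convergent: every reachable process is may-convergent. $\mathrm{LOCKSIMPLE}_{k,IS}$ ($IS\in\{\Box,\blacksquare\}^k$, $\Box$ empty, $\blacksquare$ full): subprocesses are words over $\{P_1,T_1,\dots,P_k,T_k\}$ followed by $0$ or $\checkmark$; states $(\mathcal{P},C)$ reduce by $(P_i\mathcal{U}\mid\mathcal{P},C)\to(\mathcal{U}\mid\mathcal{P},C[C_i:=\blacksquare])$ only if $C_i=\Box$, and $(T_i\mathcal{U}\mid\mathcal{P},C)\to(\mathcal{U}\mid\mathcal{P},C[C_i:=\Box])$ always. Success = process contains $\checkmark$; a process $\mathcal{P}$ is may/must-convergent iff the state $(\mathcal{P},IS)$ is. A compositional translation $\tau$ is given by words $\tau(!),\tau(?)$ with $\tau(0)=0$,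 $\tau(\checkmark)=\checkmark$, $\tau(!\mathcal{U})=\tau(!)\tau(\mathcal{U})$, $\tau(?\mathcal{U})=\tau(?)\tau(\mathcal{U})$, $\tau$ commuting with $\mid$; correct = preserves and reflects may- and must-convergence. Blocking type of a word $S$: execute $S$ alone from $IS$; if it gets stuck at an occurrence of $P_i$ that is the first symbol from $\{P_i,T_i\}$ in $S$ the type is $P_i$, if stuck at a later occurrence of $P_i$ the type is $P_iP_i$; $\tau$ has blocking type $(W_1,W_2)$ if $\tau(!)$ has type $W_1$ and $\tau(?)$ type $W_2$. $T_j^+$ denotes nonempty words consisting only of $T_j$. *)

theory Defs
  imports Main "HOL-Library.Multiset"
begin

datatype ssub = SCheck | SZero | SSnd ssub | SRcv ssub

type_synonym sproc = "ssub multiset"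

inductive sync_step :: "sproc \<Rightarrow> sproc \<Rightarrow> bool" where
  "sync_step ({#SSnd u1, SRcv u2#} + P) ({#u1, u2#} + P)"

definition sync_success :: "sproc \<Rightarrow> bool" where
  "sync_success P \<longleftrightarrow> SCheck \<in># P"

definition sync_may :: "sproc \<Rightarrow> bool" where
  "sync_may P \<longleftrightarrow> (\<exists>P'. sync_step\<^sup>*\<^sup>* P P' \<and> sync_success P')"

definition sync_must :: "sproc \<Rightarrow> bool" where
  "sync_must P \<longleftrightarrow> (\<forall>P'. sync_step\<^sup>*\<^sup>* P P' \<longrightarrow> sync_may P')"

text \<open>Lock actions: Pl i = P_i, Tl i = T_i (indices 1..k).  A store is a bool list of
length k; entry i-1 is True iff lock i is full.  A subprocess is a word followed by
0 (False) or the success symbol (True).\<close>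

datatype lact = Pl nat | Tl nat

type_synonym lsub = "lact list \<times> bool"
type_synonym lproc = "lsub multiset"
type_synonym store = "bool list"

definition valid_word :: "nat \<Rightarrow> lact list \<Rightarrow> bool" where
  "valid_word k w \<longleftrightarrow> (\<forall>a\<in>set w. case a of Pl i \<Rightarrow> 1 \<le> i \<and> i \<le> k | Tl i \<Rightarrow> 1 \<le> i \<and> i \<le> k)"

inductive lock_step :: "lproc \<times> store \<Rightarrow> lproc \<times> store \<Rightarrow> bool" where
  lockP: "\<lbrakk>1 \<le> i; i \<le> length C; \<not> C ! (i - 1)\<rbrakk> \<Longrightarrow>
     lock_step ({#(Pl i # w, e)#} + P, C) ({#(w, e)#} + P, C[i - 1 := True])"
| lockT: "\<lbrakk>1 \<le> i; i \<le> length C\<rbrakk> \<Longrightarrow>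
     lock_step ({#(Tl i # w, e)#} + P, C) ({#(w, e)#} + P, C[i - 1 := False])"

definition lock_success :: "lproc \<times> store \<Rightarrow> bool" where
  "lock_success s \<longleftrightarrow> ([], True) \<in># fst s"

definition lock_may :: "lproc \<times> store \<Rightarrow> bool" where
  "lock_may s \<longleftrightarrow> (\<exists>s'. lock_step\<^sup>*\<^sup>* s s' \<and> lock_success s')"

definition lock_must :: "lproc \<times> store \<Rightarrow> bool" where
  "lock_must s \<longleftrightarrow> (\<forall>s'. lock_step\<^sup>*\<^sup>* s s' \<longrightarrow> lock_may s')"

text \<open>A compositional translation is determined by the words w1 = tau(!) and w2 = tau(?).\<close>

fun tr_sub :: "lact list \<Rightarrow> lact list \<Rightarrow> ssub \<Rightarrow> lsub" where
  "tr_sub w1 w2 SCheck = ([], True)"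
| "tr_sub w1 w2 SZero = ([], False)"
| "tr_sub w1 w2 (SSnd u) = (w1 @ fst (tr_sub w1 w2 u), snd (tr_sub w1 w2 u))"
| "tr_sub w1 w2 (SRcv u) = (w2 @ fst (tr_sub w1 w2 u), snd (tr_sub w1 w2 u))"

definition tr_proc :: "lact list \<Rightarrow> lact list \<Rightarrow> sproc \<Rightarrow> lproc" where
  "tr_proc w1 w2 P = image_mset (tr_sub w1 w2) P"

definition correct_translation :: "nat \<Rightarrow> store \<Rightarrow> lact list \<Rightarrow> lact list \<Rightarrow> bool" where
  "correct_translation k IS w1 w2 \<longleftrightarrow>
     valid_word k w1 \<and> valid_word k w2 \<and>
     (\<forall>P. (sync_may P \<longleftrightarrow> lock_may (tr_proc w1 w2 P, IS)) \<and>
          (sync_must P \<longleftrightarrow> lock_must (tr_proc w1 w2 P, IS)))"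

fun run_word :: "store \<Rightarrow> lact list \<Rightarrow> store option" where
  "run_word C [] = Some C"
| "run_word C (Pl i # w) = (if C ! (i - 1) then None else run_word (C[i - 1 := True]) w)"
| "run_word C (Tl i # w) = run_word (C[i - 1 := False]) w"

definition stuck_at :: "store \<Rightarrow> lact list \<Rightarrow> nat \<Rightarrow> nat \<Rightarrow> bool" where
  "stuck_at IS S n i \<longleftrightarrow> n < length S \<and> S ! n = Pl i \<and>
     (\<exists>C. run_word IS (take n S) = Some C \<and> C ! (i - 1))"

datatype btype = BT_P nat | BT_PP nat

definition has_btype :: "store \<Rightarrow> lact list \<Rightarrow> btype \<Rightarrow> bool" where
  "has_btype IS S bt \<longleftrightarrow> (case bt of
     BT_P i \<Rightarrow> (\<exists>n. stuck_at IS S n i \<and> (\<forall>m<n. S ! m \<noteq> Pl i \<and> S ! m \<noteq> Tl i))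
   | BT_PP i \<Rightarrow> (\<exists>n. stuck_at IS S n i \<and> (\<exists>m<n. S ! m = Pl i \<or> S ! m = Tl i)))"

end

theory Submission
  imports Defs
begin

text \<open>If \<open>\<tau>(!)\<close> begins with a word of \<open>T\<close>-actions touching every lock, then every copy of
  \<open>\<tau>(!)\<close> can serve as a reset: running that prefix empties the whole store, whatever it was.
  In \<open>!\<checkmark> | !0 | \<dots> | !0\<close> the thread of \<open>!\<checkmark>\<close> may then execute \<open>\<tau>(!)\<close> to the end, spending one
  copy of \<open>!0\<close> to reset the store before each of its \<open>P\<close>-actions, so the translation is
  may-convergent, whereas the source process cannot reduce at all and is not.\<close>

lemma lock_step_Pl:
  "\<lbrakk>1 \<le> i; i \<le> length C; \<not> C ! (i - 1)\<rbrakk> \<Longrightarrow>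
     lock_step (add_mset (Pl i # w, e) Q, C) (add_mset (w, e) Q, C[i - 1 := True])"
  using lockP[of i C w e Q] by simp

lemma lock_step_Tl:
  "\<lbrakk>1 \<le> i; i \<le> length C\<rbrakk> \<Longrightarrow>
     lock_step (add_mset (Tl i # w, e) Q, C) (add_mset (w, e) Q, C[i - 1 := False])"
  using lockT[of i C w e Q] by simp

lemma lock_may_if_steps: "\<lbrakk>lock_step\<^sup>*\<^sup>* s s'; lock_may s'\<rbrakk> \<Longrightarrow> lock_may s"
  unfolding lock_may_def by (meson rtranclp_trans)

definition clear_locks :: "nat list \<Rightarrow> store \<Rightarrow> store" where
  "clear_locks js C = fold (\<lambda>i C. C[i - 1 := False]) js C"

lemma lock_steps_Tl_word:
  assumes "\<forall>i\<in>set js. 1 \<le> i \<and> i \<le> length C"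
  shows "lock_step\<^sup>*\<^sup>* (add_mset (map Tl js @ w, e) Q, C)
           (add_mset (w, e) Q, clear_locks js C)"
  using assms
proof (induction js arbitrary: C)
  case Nil
  then show ?case by (simp add: clear_locks_def)
next
  case (Cons i js)
  have "lock_step (add_mset (map Tl (i # js) @ w, e) Q, C)
          (add_mset (map Tl js @ w, e) Q, C[i - 1 := False])"
    using Cons.prems lock_step_Tl[of i C "map Tl js @ w" e Q] by simp
  moreover have "lock_step\<^sup>*\<^sup>* (add_mset (map Tl js @ w, e) Q, C[i - 1 := False])
      (add_mset (w, e) Q, clear_locks js (C[i - 1 := False]))"
    using Cons.prems by (intro Cons.IH) simp
  ultimately show ?case by (simp add: clear_locks_def)
qed

lemma length_clear_locks [simp]: "length (clear_locks js C) = length C"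
  by (induction js arbitrary: C) (simp_all add: clear_locks_def)

lemma nth_clear_locks:
  "n < length C \<Longrightarrow> clear_locks js C ! n \<longleftrightarrow> C ! n \<and> (\<forall>i\<in>set js. i - 1 \<noteq> n)"
proof (induction js arbitrary: C)
  case (Cons i js)
  have "C[i - 1 := False] ! n \<longleftrightarrow> C ! n \<and> i - 1 \<noteq> n"
    using Cons.prems by (cases "i - 1 = n") simp_all
  then show ?case
    using Cons by (simp add: clear_locks_def)
qed (simp add: clear_locks_def)

lemma clear_locks_all:
  assumes "set js = {1..length C}"
  shows "clear_locks js C = replicate (length C) False"
proof (rule nth_equalityI)
  fix n assume "n < length (clear_locks js C)"
  then have "n < length C" by simp
  moreover have "Suc n \<in> set js" using assms \<open>n < length C\<close> by simp
  ultimately show "clear_locks js C ! n = replicate (length C) False ! n"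
    using nth_clear_locks[of n C js] by (metis diff_Suc_1 nth_replicate)
qed simp

lemma lock_steps_clearing_word:
  assumes "set js = {1..length C}"
  shows "lock_step\<^sup>*\<^sup>* (add_mset (map Tl js @ v, e) Q, C)
           (add_mset (v, e) Q, replicate (length C) False)"
  using lock_steps_Tl_word[of js C v e Q] clear_locks_all[OF assms] assms by simp

lemma lock_may_with_clearing_helpers:
  assumes "set js = {1..k}" and "length C = k" and "valid_word k w" and "length w \<le> m"
  shows "lock_may (add_mset (w, True) (replicate_mset m (map Tl js @ v, False) + R), C)"
  using assms(2-)
proof (induction w arbitrary: C m R)
  case Nil
  then show ?case by (auto simp: lock_may_def lock_success_def)
next
  case (Cons a w)
  let ?h = "(map Tl js @ v, False)"
  have w: "valid_word k w" and i: "1 \<le> i" "i \<le> k" if "a = Pl i \<or> a = Tl i" for i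
    using Cons.prems(2) that by (auto simp: valid_word_def)
  show ?case
  proof (cases a)
    case (Tl i)
    then have "lock_step (add_mset (a # w, True) (replicate_mset m ?h + R), C)
        (add_mset (w, True) (replicate_mset m ?h + R), C[i - 1 := False])"
      using i Cons.prems(1) lock_step_Tl[of i C w True] by simp
    moreover have "lock_may (add_mset (w, True) (replicate_mset m ?h + R), C[i - 1 := False])"
      using Tl w Cons.prems by (intro Cons.IH) simp_all
    ultimately show ?thesis by (blast intro: lock_may_if_steps)
  next
    case (Pl i)
    obtain m' where m: "m = Suc m'" using Cons.prems(3) by (cases m) auto
    define Q where "Q = replicate_mset m' ?h + add_mset (v, False) R"
    have "lock_step\<^sup>*\<^sup>* (add_mset (a # w, True) (replicate_mset m ?h + R), C)
        (add_mset (Pl i # w, True) Q, replicate k False)"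
      using lock_steps_clearing_word[of js C v False "add_mset (a # w, True) (replicate_mset m' ?h + R)"]
        assms(1) Cons.prems(1) by (simp add: m Q_def Pl add_mset_commute)
    moreover have "lock_step (add_mset (Pl i # w, True) Q, replicate k False)
        (add_mset (w, True) Q, (replicate k False)[i - 1 := True])"
      using Pl i by (intro lock_step_Pl) simp_all
    moreover have "lock_may (add_mset (w, True) Q, (replicate k False)[i - 1 := True])"
      unfolding Q_def using Pl w Cons.prems(3) m by (intro Cons.IH) simp_all
    ultimately show ?thesis
      by (meson lock_may_if_steps rtranclp.rtrancl_into_rtrancl)
  qed
qed

lemma sync_step_has_receiver: "sync_step P P' \<Longrightarrow> \<exists>u. SRcv u \<in># P"
  by (cases rule: sync_step.cases) auto

lemma sync_steps_without_receiver:
  "\<lbrakk>sync_step\<^sup>*\<^sup>* P P'; \<forall>u. SRcv u \<notin># P\<rbrakk> \<Longrightarrow> P' = P"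
  by (induction rule: converse_rtranclp_induct) (auto dest: sync_step_has_receiver)

lemma not_sync_may_without_receiver:
  "\<lbrakk>\<forall>u. SRcv u \<notin># P; SCheck \<notin># P\<rbrakk> \<Longrightarrow> \<not> sync_may P"
  by (auto simp: sync_may_def sync_success_def dest: sync_steps_without_receiver)

theorem correct_translation_no_clearing_prefix:
  assumes "correct_translation k IS w1 w2" and "length IS = k" and "set js = {1..k}"
  shows "w1 \<noteq> map Tl js @ v"
proof
  assume w1: "w1 = map Tl js @ v"
  define P where "P = add_mset (SSnd SCheck) (replicate_mset (length w1) (SSnd SZero))"
  have "\<not> sync_may P"
    by (rule not_sync_may_without_receiver) (auto simp: P_def)
  moreover have "tr_proc w1 w2 P = add_mset (w1, True) (replicate_mset (length w1) (w1, False))"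
    by (simp add: tr_proc_def P_def)
  moreover have "lock_may (add_mset (w1, True) (replicate_mset (length w1) (w1, False)), IS)"
    using assms lock_may_with_clearing_helpers[of js k IS w1 "length w1" v "{#}"] w1
    by (simp add: correct_translation_def)
  ultimately show False
    using assms(1) by (simp add: correct_translation_def)
qed

theorem lemma5p3:
  fixes IS :: "bool list" and w1 w2 :: "lact list"
  assumes "length IS = 2"
    and "correct_translation 2 IS w1 w2"
    and "has_btype IS w1 (BT_PP 1)"
    and "has_btype IS w2 (BT_PP 2)"
  shows "\<not> (\<exists>n v. n \<ge> 1 \<and> w1 = replicate n (Tl 1) @ [Tl 2] @ v)
       \<and> \<not> (\<exists>n v. n \<ge> 1 \<and> w1 = replicate n (Tl 2) @ [Tl 1] @ v)"
proof -
  have no_prefix: "w1 \<noteq> replicate n (Tl j) @ [Tl k] @ v"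
    if "set (replicate n j @ [k]) = {1..2}" for n j k v
    using correct_translation_no_clearing_prefix[OF assms(2,1) that, of v] by simp
  have "set (replicate n 1 @ [2]) = {1..2::nat}" and "set (replicate n 2 @ [1]) = {1..2::nat}"
    if "n \<ge> 1" for n
    using that by auto
  then show ?thesis
    using no_prefix by blast
qed

end
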